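(* Consider the following kinetic transport model. Let $\{Z_k\}_{k\ge1}$ be a Markov chain on the two states $\{\mathrm{F},\mathrm{A}\}$ ("free" and "adsorbed") with initial distribution $\lambda=(\lambda_{\mathrm F},\lambda_{\mathrm A})$ and transition matrix $$\begin{pmatrix} p_{\mathrm F\mathrm F} & p_{\mathrm F\mathrm A}\\ p_{\mathrm A\mathrm F} & p_{\mathrm A\mathrm A}\end{pmatrix}=\begin{pmatrix}1-a & a\\ b & 1-b\end{pmatrix},\qquad a,b\in[0,1].$$ Let $K_n=\sum_{k=1}^n \mathbf 1_{\{Z_k=\mathrm F\}}$ and $f_n(k)=P(K_n=k)$ for $0\le k\le n$. Independently of $\{Z_k\}$, let $(X_k,Y_k)_{k\ge1}$ be i.i.d. random vectors in $\mathbb Z^2$ with $$P((X_k,Y_k)=(j,0))=\alpha,\qquad P((X_k,Y_k)=(0,j))=\beta\qquad (j=\pm1),$$ where $\alpha,\beta\ge0$ and $\alpha+\beta=1/2$. Define $S(0)=(0,0)$ and, for $n\ge1$, $$S(n)=(S_X(n),S_Y(n))=\sum_{k=1}^{K_n}(X_k+1,\,Y_k).$$ Then for $n\ge1$, $0\le x\le 2n$ and $-n\le y\le n$ with $x\equiv y\pmod 2$, $$P(S(n)=(x,y))=\sum_{k=\lceil x/2\rceil}^n f_n(k)\sum_{j=0\vee(x-k)}^{\frac{x+y}{2}\wedge\frac{x-y}{2}}\frac{k!\;\alpha^{2j+k-x}\beta^{x-2j}}{j!\,(j+k-x)!\,((x+y)/2-j)!\,((x-y)/2-j)!},$$ and $P(S(n)=(x,y))=0$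 if $x\not\equiv y\pmod 2$.
   Context: $c\vee d=\max\{c,d\}$, $c\wedge d=\min\{c,d\}$; $\lceil c\rceil$ is the least integer $\ge c$. An empty sum (upper limit smaller than lower limit) is zero. *)

theory Defs
  imports "HOL-Probability.Probability"
begin

datatype st = F | A

definition mc_init :: "real \<Rightarrow> real \<Rightarrow> st \<Rightarrow> real" where
  "mc_init lF lA z = (case z of F \<Rightarrow> lF | A \<Rightarrow> lA)"

definition mc_trans :: "real \<Rightarrow> real \<Rightarrow> st \<Rightarrow> st \<Rightarrow> real" where
  "mc_trans a b z w = (case (z, w) of
      (F, F) \<Rightarrow> 1 - a | (F, A) \<Rightarrow> a | (A, F) \<Rightarrow> b | (A, A) \<Rightarrow> 1 - b)"

definition mc_path_prob :: "real \<Rightarrow> real \<Rightarrow> real \<Rightarrow> real \<Rightarrow> st list \<Rightarrow> real" where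
  "mc_path_prob lF lA a b zs = (case zs of [] \<Rightarrow> 1
     | z # _ \<Rightarrow> mc_init lF lA z * (\<Prod>i<length zs - 1. mc_trans a b (zs ! i) (zs ! Suc i)))"

definition step_prob :: "real \<Rightarrow> real \<Rightarrow> int \<times> int \<Rightarrow> real" where
  "step_prob \<alpha> \<beta> v = (if v = (1, 0) \<or> v = (-1, 0) then \<alpha>
                        else if v = (0, 1) \<or> v = (0, -1) then \<beta> else 0)"

definition Kfree :: "(nat \<Rightarrow> 'w \<Rightarrow> st) \<Rightarrow> nat \<Rightarrow> 'w \<Rightarrow> nat" where
  "Kfree Z m \<omega> = card {k \<in> {1..m}. Z k \<omega> = F}"

definition Spos :: "(nat \<Rightarrow> 'w \<Rightarrow> st) \<Rightarrow> (nat \<Rightarrow> 'w \<Rightarrow> int) \<Rightarrow> (nat \<Rightarrow> 'w \<Rightarrow> int)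
    \<Rightarrow> nat \<Rightarrow> 'w \<Rightarrow> int \<times> int" where
  "Spos Z X Y m \<omega> = ((\<Sum>k = 1..Kfree Z m \<omega>. X k \<omega> + 1), (\<Sum>k = 1..Kfree Z m \<omega>. Y k \<omega>))"

end

theory Submission
  imports Defs "HOL-Combinatorics.Multiset_Permutations"
begin

text \<open>
  Given the free/adsorbed path \<open>Z\<^sub>1, ..., Z\<^sub>n\<close>, \<open>S(n)\<close> is the endpoint of a walk of \<open>K\<^sub>n\<close>
  independent steps \<open>(X\<^sub>k + 1, Y\<^sub>k)\<close>, which are \<open>(2,0), (0,0), (1,1), (1,-1)\<close> with
  probabilities \<open>\<alpha>, \<alpha>, \<beta>, \<beta>\<close>. Hence \<open>P(S(n) = (x,y)) = \<Sum>\<^sub>k f\<^sub>n(k) W\<^sub>k(x,y)\<close>, where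
  \<open>W\<^sub>k(x,y)\<close> is the probability that \<open>k\<close> such steps end at \<open>(x,y)\<close>. A step sequence using
  \<open>p, q, u, v\<close> steps of the four kinds ends at \<open>(2p + u + v, u - v)\<close>, has probability
  \<open>\<alpha>^(p + q) \<beta>^(u + v)\<close>, and there are \<open>k!/(p! q! u! v!)\<close> of them. As \<open>x - y = 2(p + v)\<close>,
  nothing is reached when \<open>x - y\<close> is odd; otherwise \<open>k\<close> and the endpoint determine
  \<open>q, u, v\<close> from \<open>j = p\<close>, which gives the inner sum, and that sum is empty when \<open>2k < x\<close>.
\<close>

definition unit_steps :: "(int \<times> int) set" where
  "unit_steps = {(1, 0), (-1, 0), (0, 1), (0, -1)}"

definition step_lists :: "nat \<Rightarrow> (int \<times> int) list set" where
  "step_lists k = {vs. set vs \<subseteq> unit_steps \<and> length vs = k}"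

definition walk_weight :: "real \<Rightarrow> real \<Rightarrow> (int \<times> int) list \<Rightarrow> real" where
  "walk_weight \<alpha> \<beta> vs = (\<Prod>v\<leftarrow>vs. step_prob \<alpha> \<beta> v)"

definition walk_end :: "(int \<times> int) list \<Rightarrow> int \<times> int" where
  "walk_end vs = ((\<Sum>v\<leftarrow>vs. fst v + 1), (\<Sum>v\<leftarrow>vs. snd v))"

definition endpoint_prob :: "real \<Rightarrow> real \<Rightarrow> nat \<Rightarrow> int \<times> int \<Rightarrow> real" where
  "endpoint_prob \<alpha> \<beta> k z = (\<Sum>vs \<in> {vs \<in> step_lists k. walk_end vs = z}. walk_weight \<alpha> \<beta> vs)"

definition step_counts :: "(int \<times> int) list \<Rightarrow> nat \<times> nat \<times> nat \<times> nat" where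
  "step_counts vs =
     (count_list vs (1, 0), count_list vs (-1, 0), count_list vs (0, 1), count_list vs (0, -1))"

definition steps_mset :: "nat \<Rightarrow> nat \<Rightarrow> nat \<Rightarrow> nat \<Rightarrow> (int \<times> int) multiset" where
  "steps_mset p q u v = replicate_mset p (1, 0) + replicate_mset q (-1, 0)
     + replicate_mset u (0, 1) + replicate_mset v (0, -1)"

lemma finite_step_lists: "finite (step_lists k)"
  unfolding step_lists_def by (rule finite_lists_length_eq) (simp add: unit_steps_def)

lemma sum_walk_weight_step_lists:
  assumes "\<alpha> + \<beta> = 1/2"
  shows "(\<Sum>vs \<in> step_lists k. walk_weight \<alpha> \<beta> vs) = 1"
proof (induction k)
  case 0
  have "step_lists 0 = {[]}" by (auto simp: step_lists_def)
  then show ?case by (simp add: walk_weight_def)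
next
  case (Suc k)
  have "(\<Sum>vs \<in> step_lists (Suc k). walk_weight \<alpha> \<beta> vs)
      = (\<Sum>(vs, v) \<in> step_lists k \<times> unit_steps. step_prob \<alpha> \<beta> v * walk_weight \<alpha> \<beta> vs)"
    unfolding step_lists_def lists_length_Suc_eq
    by (subst sum.reindex) (auto simp: inj_on_def walk_weight_def case_prod_beta)
  also have "\<dots> = (\<Sum>v \<in> unit_steps. step_prob \<alpha> \<beta> v) * (\<Sum>vs \<in> step_lists k. walk_weight \<alpha> \<beta> vs)"
    by (simp add: sum.cartesian_product[symmetric] sum_product sum.swap[of _ unit_steps])
  finally show ?case
    using Suc assms by (simp add: unit_steps_def step_prob_def)
qed

lemma step_list_statistics:
  assumes "set vs \<subseteq> unit_steps" and "step_counts vs = (p, q, u, v)"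
  shows "length vs = p + q + u + v"
    and "walk_weight \<alpha> \<beta> vs = \<alpha> ^ (p + q) * \<beta> ^ (u + v)"
    and "walk_end vs = (2 * int p + int u + int v, int u - int v)"
proof -
  let ?c = "count_list vs"
  have "length vs = ?c (1, 0) + ?c (-1, 0) + ?c (0, 1) + ?c (0, -1) \<and>
      walk_weight \<alpha> \<beta> vs = \<alpha> ^ (?c (1, 0) + ?c (-1, 0)) * \<beta> ^ (?c (0, 1) + ?c (0, -1)) \<and>
      walk_end vs = (2 * int (?c (1, 0)) + int (?c (0, 1)) + int (?c (0, -1)), int (?c (0, 1)) - int (?c (0, -1)))"
    using assms(1)
  proof (induction vs)
    case Nil
    then show ?case
      by (simp add: walk_weight_def walk_end_def)
  next
    case (Cons d vs)
    then consider "d = (1, 0)" | "d = (-1, 0)" | "d = (0, 1)" | "d = (0, -1)"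
      by (auto simp: unit_steps_def)
    then show ?case
      using Cons by cases (simp_all add: walk_weight_def walk_end_def step_prob_def)
  qed
  with assms(2) show "length vs = p + q + u + v" "walk_weight \<alpha> \<beta> vs = \<alpha> ^ (p + q) * \<beta> ^ (u + v)"
    "walk_end vs = (2 * int p + int u + int v, int u - int v)"
    by (simp_all add: step_counts_def)
qed

lemma mset_eq_steps_mset_iff:
  "mset vs = steps_mset p q u v \<longleftrightarrow> set vs \<subseteq> unit_steps \<and> step_counts vs = (p, q, u, v)"
proof
  assume vs: "mset vs = steps_mset p q u v"
  have "set vs = set_mset (steps_mset p q u v)" by (simp flip: vs)
  also have "\<dots> \<subseteq> unit_steps" by (auto simp: steps_mset_def unit_steps_def split: if_splits)
  finally have "set vs \<subseteq> unit_steps" .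
  moreover have "count_list vs d = count (steps_mset p q u v) d" for d
    using count_mset[of vs d] by (simp add: vs)
  ultimately show "set vs \<subseteq> unit_steps \<and> step_counts vs = (p, q, u, v)"
    by (simp add: step_counts_def steps_mset_def)
next
  assume "set vs \<subseteq> unit_steps \<and> step_counts vs = (p, q, u, v)"
  then show "mset vs = steps_mset p q u v"
    by (induction vs arbitrary: p q u v) (auto simp: step_counts_def unit_steps_def steps_mset_def)
qed

lemma card_permutations_of_steps_mset:
  "real (card (permutations_of_multiset (steps_mset p q u v)))
     = fact (p + q + u + v) / (fact p * fact q * fact u * fact v)"
proof -
  let ?A = "steps_mset p q u v"
  have "(\<Prod>d \<in> set_mset ?A. fact (count ?A d) :: nat) = (\<Prod>d \<in> unit_steps. fact (count ?A d))"
    by (rule prod.mono_neutral_left)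
       (auto simp: unit_steps_def steps_mset_def not_in_iff split: if_splits)
  also have "\<dots> = fact p * fact q * fact u * fact v"
    by (simp add: unit_steps_def steps_mset_def)
  finally have "card (permutations_of_multiset ?A) * (fact p * fact q * fact u * fact v) = fact (size ?A)"
    using card_permutations_of_multiset_aux[of ?A] by simp
  then have "real (card (permutations_of_multiset ?A) * (fact p * fact q * fact u * fact v))
      = real (fact (size ?A))"
    by (rule arg_cong)
  then have "real (card (permutations_of_multiset ?A)) * (fact p * fact q * fact u * fact v)
      = fact (p + q + u + v)"
    by (simp add: steps_mset_def)
  then show ?thesis
    by (simp add: eq_divide_eq)
qed

lemma endpoint_prob_eq_sum_step_counts:
  "endpoint_prob \<alpha> \<beta> k (x, y) =
     (\<Sum>(p, q, u, v) \<in> {(p, q, u, v). p + q + u + v = k \<and> 2 * int p + int u + int v = x \<and> int u - int v = y}.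
        fact k * \<alpha> ^ (p + q) * \<beta> ^ (u + v) / (fact p * fact q * fact u * fact v))"
  (is "_ = sum ?G ?C")
proof -
  define S where "S = {vs \<in> step_lists k. walk_end vs = (x, y)}"
  have "?C \<subseteq> {..k} \<times> {..k} \<times> {..k} \<times> {..k}"
    by auto
  then have "finite ?C"
    by (rule finite_subset) simp
  have "step_counts vs \<in> ?C" if "vs \<in> S" for vs
  proof -
    obtain p q u v where pquv: "step_counts vs = (p, q, u, v)"
      by (metis prod_cases4)
    from that have "set vs \<subseteq> unit_steps" "length vs = k" "walk_end vs = (x, y)"
      by (simp_all add: S_def step_lists_def)
    with step_list_statistics[OF _ pquv] show ?thesis
      by (simp add: pquv)
  qed
  then have "step_counts ` S \<subseteq> ?C"
    by (rule image_subsetI)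
  moreover have "finite S"
    by (simp add: S_def finite_step_lists)
  ultimately have "endpoint_prob \<alpha> \<beta> k (x, y) = (\<Sum>c \<in> ?C. \<Sum>vs \<in> {vs \<in> S. step_counts vs = c}. walk_weight \<alpha> \<beta> vs)"
    unfolding endpoint_prob_def S_def[symmetric]
    using \<open>finite ?C\<close> by (simp add: sum.group)
  also have "\<dots> = sum ?G ?C"
  proof (rule sum.cong[OF refl])
    fix c assume "c \<in> ?C"
    moreover obtain p q u v where c: "c = (p, q, u, v)"
      by (metis prod_cases4)
    ultimately have pquv: "p + q + u + v = k" "2 * int p + int u + int v = x" "int u - int v = y"
      by simp_all
    let ?P = "permutations_of_multiset (steps_mset p q u v)"
    have "{vs \<in> S. step_counts vs = c} = ?P"
      using pquv step_list_statistics[of _ p q u v]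
      by (auto simp: c S_def step_lists_def permutations_of_multiset_def mset_eq_steps_mset_iff)
    then have "(\<Sum>vs \<in> {vs \<in> S. step_counts vs = c}. walk_weight \<alpha> \<beta> vs)
        = card ?P * (\<alpha> ^ (p + q) * \<beta> ^ (u + v))"
      using step_list_statistics(2)[of _ p q u v]
      by (simp add: permutations_of_multiset_def mset_eq_steps_mset_iff)
    also have "\<dots> = ?G c"
      using card_permutations_of_steps_mset[of p q u v] by (simp add: c pquv(1))
    finally show "(\<Sum>vs \<in> {vs \<in> S. step_counts vs = c}. walk_weight \<alpha> \<beta> vs) = ?G c" .
  qed
  finally show ?thesis .
qed

lemma endpoint_prob_odd:
  assumes "odd (x - y)"
  shows "endpoint_prob \<alpha> \<beta> k (x, y) = 0"
proof -
  have "x - y = 2 * (int p + int v)" if "2 * int p + int u + int v = x" "int u - int v = y" for p u v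
    using that by simp
  with assms have "{(p, q, u, v). p + q + u + v = k \<and> 2 * int p + int u + int v = x \<and> int u - int v = y} = {}"
    by fastforce
  then show ?thesis
    by (simp only: endpoint_prob_eq_sum_step_counts sum.empty)
qed

lemma endpoint_prob_out_of_reach:
  assumes "2 * int k < x"
  shows "endpoint_prob \<alpha> \<beta> k (x, y) = 0"
  unfolding endpoint_prob_eq_sum_step_counts using assms by (intro sum.neutral) auto

lemma endpoint_prob_closed_form:
  assumes "even (x - y)"
  shows "endpoint_prob \<alpha> \<beta> k (x, y) =
    (\<Sum>j \<in> {max 0 (x - int k) .. min ((x + y) div 2) ((x - y) div 2)}.
       fact k * \<alpha> ^ nat (2 * j + int k - x) * \<beta> ^ nat (x - 2 * j) /
       (fact (nat j) * fact (nat (j + int k - x)) * fact (nat ((x + y) div 2 - j))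
         * fact (nat ((x - y) div 2 - j))))"
  (is "_ = (\<Sum>j \<in> ?J. ?term j)")
proof -
  obtain m where m: "x - y = 2 * m"
    using assms by blast
  then have half: "(x + y) div 2 = y + m" "(x - y) div 2 = m"
    by presburger+
  show ?thesis
    unfolding endpoint_prob_eq_sum_step_counts
  proof (rule sum.reindex_bij_witness[where j = "\<lambda>(p, q, u, v). int p"
        and i = "\<lambda>j. (nat j, nat (j + int k - x), nat ((x + y) div 2 - j), nat ((x - y) div 2 - j))"])
    show "(nat j, nat (j + int k - x), nat ((x + y) div 2 - j), nat ((x - y) div 2 - j))
          \<in> {(p, q, u, v). p + q + u + v = k \<and> 2 * int p + int u + int v = x \<and> int u - int v = y}"
      if "j \<in> ?J" for j
      using that m half by auto
    have summand: "?term (int p) = fact k * \<alpha> ^ (p + q) * \<beta> ^ (u + v) / (fact p * fact q * fact u * fact v)"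
      if "p + q + u + v = k" "2 * int p + int u + int v = x" "int u - int v = y" for p q u v
    proof -
      have "x + y = 2 * (int p + int u)" "x - y = 2 * (int p + int v)"
        using that by (simp_all add: algebra_simps)
      then have "(x + y) div 2 = int p + int u" "(x - y) div 2 = int p + int v"
        by simp_all
      with that have "nat (2 * int p + int k - x) = p + q" "nat (x - 2 * int p) = u + v"
        "nat (int p + int k - x) = q" "nat ((x + y) div 2 - int p) = u" "nat ((x - y) div 2 - int p) = v"
        by (simp_all add: nat_eq_iff)
      then show ?thesis
        by simp
    qed
    show "?term ((\<lambda>(p, q, u, v). int p) c) =
        (case c of (p, q, u, v) \<Rightarrow> fact k * \<alpha> ^ (p + q) * \<beta> ^ (u + v) / (fact p * fact q * fact u * fact v))"
      if "c \<in> {(p, q, u, v). p + q + u + v = k \<and> 2 * int p + int u + int v = x \<and> int u - int v = y}" for c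
      using that summand by (cases c) simp
  qed (use m in \<open>auto simp: half\<close>)
qed

lemma sum_endpoint_prob_closed_form:
  fixes c :: "nat \<Rightarrow> real"
  assumes "0 \<le> x" and "even (x - y)"
  shows "(\<Sum>k \<le> n. c k * endpoint_prob \<alpha> \<beta> k (x, y)) =
    (\<Sum>k \<in> {\<lceil>real_of_int x / 2\<rceil> .. int n}. c (nat k) *
       (\<Sum>j \<in> {max 0 (x - k) .. min ((x + y) div 2) ((x - y) div 2)}.
          fact (nat k) * \<alpha> ^ nat (2 * j + k - x) * \<beta> ^ nat (x - 2 * j) /
          (fact (nat j) * fact (nat (j + k - x)) * fact (nat ((x + y) div 2 - j))
            * fact (nat ((x - y) div 2 - j)))))"
proof -
  define m where "m = nat \<lceil>real_of_int x / 2\<rceil>"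
  have "0 \<le> \<lceil>real_of_int x / 2\<rceil>"
    using assms(1) by simp
  then have m: "int m = \<lceil>real_of_int x / 2\<rceil>"
    by (simp add: m_def)
  have "2 * int k < x" if "k < m" for k
    using that m by linarith
  then have "(\<Sum>k \<le> n. c k * endpoint_prob \<alpha> \<beta> k (x, y)) = (\<Sum>k \<in> {m..n}. c k * endpoint_prob \<alpha> \<beta> k (x, y))"
    by (intro sum.mono_neutral_right) (auto simp: endpoint_prob_out_of_reach)
  also have "\<dots> = (\<Sum>k \<in> int ` {m..n}. c (nat k) * endpoint_prob \<alpha> \<beta> (nat k) (x, y))"
    by (simp add: sum.reindex)
  also have "\<dots> = (\<Sum>k \<in> {\<lceil>real_of_int x / 2\<rceil> .. int n}. c (nat k) *
       (\<Sum>j \<in> {max 0 (x - k) .. min ((x + y) div 2) ((x - y) div 2)}.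
          fact (nat k) * \<alpha> ^ nat (2 * j + k - x) * \<beta> ^ nat (x - 2 * j) /
          (fact (nat j) * fact (nat (j + k - x)) * fact (nat ((x + y) div 2 - j))
            * fact (nat ((x - y) div 2 - j)))))"
    (is "_ = (\<Sum>k \<in> ?K. ?summand k)")
  proof (rule sum.cong)
    show "int ` {m..n} = ?K"
      by (simp add: image_int_atLeastAtMost m)
    fix k assume "k \<in> ?K"
    then have "\<lceil>real_of_int x / 2\<rceil> \<le> k"
      by simp
    with \<open>0 \<le> \<lceil>real_of_int x / 2\<rceil>\<close> have "int (nat k) = k"
      by linarith
    then show "c (nat k) * endpoint_prob \<alpha> \<beta> (nat k) (x, y) = ?summand k"
      by (simp add: endpoint_prob_closed_form[OF assms(2)])
  qed
  finally show ?thesis .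
qed

lemma (in prob_space) prob_vimage_finite_eq_sum:
  assumes V: "V \<in> measurable M (count_space UNIV)" and "finite T"
  shows "prob {\<omega> \<in> space M. V \<omega> \<in> T} = (\<Sum>t \<in> T. prob {\<omega> \<in> space M. V \<omega> = t})"
proof -
  have events: "{\<omega> \<in> space M. Q (V \<omega>)} \<in> events" for Q
    by (rule measurable_sets_Collect[OF V]) simp
  have "{\<omega> \<in> space M. V \<omega> \<in> T} = (\<Union>t \<in> T. {\<omega> \<in> space M. V \<omega> = t})"
    by blast
  also have "prob \<dots> = (\<Sum>t \<in> T. prob {\<omega> \<in> space M. V \<omega> = t})"
    using events \<open>finite T\<close>
    by (intro finite_measure_finite_Union) (auto simp: disjoint_family_on_def)
  finally show ?thesis .
qed

lemma (in prob_space) prob_eq_sum_finite_support: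
  assumes V: "V \<in> measurable M (count_space UNIV)" and "finite T"
    and support: "prob {\<omega> \<in> space M. V \<omega> \<in> T} = 1"
  shows "prob {\<omega> \<in> space M. P (V \<omega>)} = (\<Sum>t \<in> {t \<in> T. P t}. prob {\<omega> \<in> space M. V \<omega> = t})"
proof -
  have events: "{\<omega> \<in> space M. Q (V \<omega>)} \<in> events" for Q
    by (rule measurable_sets_Collect[OF V]) simp
  have "AE \<omega> in M. V \<omega> \<in> T"
    using AE_prob_1[OF support] by eventually_elim simp
  then have "prob {\<omega> \<in> space M. P (V \<omega>)} = prob {\<omega> \<in> space M. V \<omega> \<in> {t \<in> T. P t}}"
    using events
    by (intro prob_eq_AE) (auto elim: AE_mp)
  also have "\<dots> = (\<Sum>t \<in> {t \<in> T. P t}. prob {\<omega> \<in> space M. V \<omega> = t})"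
    using \<open>finite T\<close> by (intro prob_vimage_finite_eq_sum[OF V]) simp
  finally show ?thesis .
qed

instance st :: finite
proof
  have "(UNIV :: st set) = {F, A}"
    using st.exhaust by auto
  then show "finite (UNIV :: st set)"
    by (metis finite.emptyI finite.insertI)
qed

lemma map_upt_eq_iff: "map f [0..<n] = xs \<longleftrightarrow> length xs = n \<and> (\<forall>i < n. f i = xs ! i)"
  by (auto simp: list_eq_iff_nth_eq)

locale adsorption_walk = prob_space M
  for M :: "'w measure" and Z :: "nat \<Rightarrow> 'w \<Rightarrow> st" and X Y :: "nat \<Rightarrow> 'w \<Rightarrow> int"
    and path_prob :: "st list \<Rightarrow> real" and \<alpha> \<beta> :: real +
  assumes Z_measurable: "\<And>k. Z k \<in> measurable M (count_space UNIV)"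
    and X_measurable: "\<And>k. X k \<in> measurable M (count_space UNIV)"
    and Y_measurable: "\<And>k. Y k \<in> measurable M (count_space UNIV)"
    and step_probs_sum: "\<alpha> + \<beta> = 1/2"
    and cylinder_law: "\<And>zs vs.
      measure M {\<omega> \<in> space M. (\<forall>i < length zs. Z (Suc i) \<omega> = zs ! i) \<and>
                             (\<forall>j < length vs. (X (Suc j) \<omega>, Y (Suc j) \<omega>) = vs ! j)}
      = path_prob zs * (\<Prod>j < length vs. step_prob \<alpha> \<beta> (vs ! j))"
begin

definition free_path :: "nat \<Rightarrow> 'w \<Rightarrow> st list" where
  "free_path m \<omega> = map (\<lambda>i. Z (Suc i) \<omega>) [0..<m]"

definition step_path :: "nat \<Rightarrow> 'w \<Rightarrow> (int \<times> int) list" where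
  "step_path m \<omega> = map (\<lambda>j. (X (Suc j) \<omega>, Y (Suc j) \<omega>)) [0..<m]"

definition cylinder :: "st list \<Rightarrow> (int \<times> int) list \<Rightarrow> 'w set" where
  "cylinder zs vs = {\<omega> \<in> space M. free_path (length zs) \<omega> = zs \<and> step_path (length vs) \<omega> = vs}"

text \<open>The path of \<open>Z\<close> up to time \<open>n\<close> together with the first \<open>K\<^sub>n\<close> steps: all that \<open>S(n)\<close> depends on.\<close>

definition trajectory :: "nat \<Rightarrow> 'w \<Rightarrow> st list \<times> (int \<times> int) list" where
  "trajectory n \<omega> = (free_path n \<omega>, step_path (count_list (free_path n \<omega>) F) \<omega>)"

lemma cylinder_eq:
  "cylinder zs vs = {\<omega> \<in> space M. (\<forall>i < length zs. Z (Suc i) \<omega> = zs ! i) \<and>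
                             (\<forall>j < length vs. (X (Suc j) \<omega>, Y (Suc j) \<omega>) = vs ! j)}"
  by (simp add: cylinder_def free_path_def step_path_def map_upt_eq_iff)

lemma cylinder_in_events: "cylinder zs vs \<in> events"
  unfolding cylinder_eq using Z_measurable X_measurable Y_measurable
  by measurable

lemma prob_cylinder: "prob (cylinder zs vs) = path_prob zs * walk_weight \<alpha> \<beta> vs"
  by (simp add: cylinder_eq cylinder_law walk_weight_def prod.list_conv_set_nth atLeast0LessThan)

lemma free_path_vimage:
  "{\<omega> \<in> space M. free_path n \<omega> = zs} = (if length zs = n then cylinder zs [] else {})"
  by (auto simp: cylinder_def free_path_def step_path_def)

lemma trajectory_vimage:
  "{\<omega> \<in> space M. trajectory n \<omega> = (zs, vs)} =
     (if length zs = n \<and> length vs = count_list zs F then cylinder zs vs else {})"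
  by (auto simp: cylinder_def trajectory_def free_path_def step_path_def)

lemma free_path_measurable: "free_path n \<in> measurable M (count_space UNIV)"
  unfolding measurable_count_space_eq2_countable
  using free_path_vimage[of n] cylinder_in_events by (auto simp: vimage_def Int_def conj_commute)

lemma trajectory_measurable: "trajectory n \<in> measurable M (count_space UNIV)"
  unfolding measurable_count_space_eq2_countable
  using trajectory_vimage[of n] cylinder_in_events by (auto simp: vimage_def Int_def conj_commute)

lemma Kfree_eq_count_list: "Kfree Z n \<omega> = count_list (free_path n \<omega>) F"
proof -
  have "{k \<in> {1..n}. Z k \<omega> = F} = Suc ` {i. i < n \<and> Z (Suc i) \<omega> = F}"
    by (auto simp: image_iff Suc_le_eq gr0_conv_Suc)
  then have "Kfree Z n \<omega> = card {i. i < n \<and> Z (Suc i) \<omega> = F}"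
    by (simp add: Kfree_def card_image)
  also have "\<dots> = count_list (free_path n \<omega>) F"
    unfolding count_list_eq_length_filter length_filter_conv_card
    by (auto simp: free_path_def intro!: arg_cong[where f = card])
  finally show ?thesis .
qed

lemma Spos_eq_walk_end: "Spos Z X Y n \<omega> = walk_end (snd (trajectory n \<omega>))"
  by (simp add: Spos_def walk_end_def trajectory_def step_path_def Kfree_eq_count_list
      interv_sum_list_conv_sum_set_nat atLeast0LessThan sum.atLeast1_atMost_eq o_def)

lemma prob_free_path: "length zs = n \<Longrightarrow> prob {\<omega> \<in> space M. free_path n \<omega> = zs} = path_prob zs"
  by (simp add: free_path_vimage prob_cylinder walk_weight_def)

lemma prob_length_free_path: "prob {\<omega> \<in> space M. free_path n \<omega> \<in> {zs. length zs = n}} = 1"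
proof -
  have "{\<omega> \<in> space M. free_path n \<omega> \<in> {zs. length zs = n}} = space M"
    by (simp add: free_path_def)
  then show ?thesis
    by (simp add: prob_space)
qed

lemma sum_path_prob: "(\<Sum>zs | length zs = n. path_prob zs) = 1"
proof -
  have "1 = prob {\<omega> \<in> space M. free_path n \<omega> \<in> {zs. length zs = n}}"
    by (rule prob_length_free_path[symmetric])
  also have "\<dots> = (\<Sum>zs | length zs = n. prob {\<omega> \<in> space M. free_path n \<omega> = zs})"
    by (rule prob_vimage_finite_eq_sum[OF free_path_measurable finite_list_length])
  also have "\<dots> = (\<Sum>zs | length zs = n. path_prob zs)"
    by (intro sum.cong) (simp_all add: prob_free_path)
  finally show ?thesis ..
qed

lemma prob_Kfree:
  "prob {\<omega> \<in> space M. Kfree Z n \<omega> = k} = (\<Sum>zs | length zs = n \<and> count_list zs F = k. path_prob zs)"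
proof -
  have "prob {\<omega> \<in> space M. count_list (free_path n \<omega>) F = k}
      = (\<Sum>zs | length zs = n \<and> count_list zs F = k. prob {\<omega> \<in> space M. free_path n \<omega> = zs})"
    using prob_eq_sum_finite_support[OF free_path_measurable finite_list_length prob_length_free_path,
        where P = "\<lambda>zs. count_list zs F = k"] by simp
  also have "\<dots> = (\<Sum>zs | length zs = n \<and> count_list zs F = k. path_prob zs)"
    by (intro sum.cong) (simp_all add: prob_free_path)
  finally show ?thesis
    by (simp add: Kfree_eq_count_list)
qed

lemma prob_trajectory_support:
  "prob {\<omega> \<in> space M. trajectory n \<omega> \<in> (SIGMA zs:{zs. length zs = n}. step_lists (count_list zs F))} = 1"
  (is "prob {\<omega> \<in> space M. trajectory n \<omega> \<in> ?T} = 1")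
proof -
  have "prob {\<omega> \<in> space M. trajectory n \<omega> \<in> ?T} = (\<Sum>t \<in> ?T. prob {\<omega> \<in> space M. trajectory n \<omega> = t})"
    by (intro prob_vimage_finite_eq_sum trajectory_measurable finite_SigmaI finite_list_length finite_step_lists)
  also have "\<dots> = (\<Sum>(zs, vs) \<in> ?T. path_prob zs * walk_weight \<alpha> \<beta> vs)"
    by (intro sum.cong) (auto simp: trajectory_vimage prob_cylinder step_lists_def)
  also have "\<dots> = (\<Sum>zs | length zs = n. path_prob zs * (\<Sum>vs \<in> step_lists (count_list zs F). walk_weight \<alpha> \<beta> vs))"
    by (simp add: sum.Sigma[symmetric] finite_list_length finite_step_lists sum_distrib_left)
  also have "\<dots> = 1"
    by (simp add: sum_walk_weight_step_lists step_probs_sum sum_path_prob)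
  finally show ?thesis .
qed

lemma prob_Spos:
  "prob {\<omega> \<in> space M. Spos Z X Y n \<omega> = z} =
     (\<Sum>k \<le> n. prob {\<omega> \<in> space M. Kfree Z n \<omega> = k} * endpoint_prob \<alpha> \<beta> k z)"
proof -
  let ?T = "SIGMA zs:{zs. length zs = n}. step_lists (count_list zs F)"
  have "prob {\<omega> \<in> space M. Spos Z X Y n \<omega> = z}
      = (\<Sum>t \<in> {t \<in> ?T. walk_end (snd t) = z}. prob {\<omega> \<in> space M. trajectory n \<omega> = t})"
    unfolding Spos_eq_walk_end
    by (intro prob_eq_sum_finite_support trajectory_measurable prob_trajectory_support
        finite_SigmaI finite_list_length finite_step_lists)
  also have "\<dots> = (\<Sum>(zs, vs) \<in> (SIGMA zs:{zs. length zs = n}. {vs \<in> step_lists (count_list zs F). walk_end vs = z}).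
      path_prob zs * walk_weight \<alpha> \<beta> vs)"
    by (intro sum.cong) (auto simp: trajectory_vimage prob_cylinder step_lists_def)
  also have "\<dots> = (\<Sum>zs | length zs = n. path_prob zs * endpoint_prob \<alpha> \<beta> (count_list zs F) z)"
    by (simp add: sum.Sigma[symmetric] finite_list_length finite_step_lists endpoint_prob_def sum_distrib_left)
  also have "\<dots> = (\<Sum>k \<le> n. \<Sum>zs | length zs = n \<and> count_list zs F = k.
      path_prob zs * endpoint_prob \<alpha> \<beta> k z)"
  proof -
    have "(\<lambda>zs. count_list zs F) ` {zs. length zs = n} \<subseteq> {..n}"
      using count_le_length by fastforce
    from sum.group[OF finite_list_length finite_atMost this,
        where h = "\<lambda>zs. path_prob zs * endpoint_prob \<alpha> \<beta> (count_list zs F) z"]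
    show ?thesis
      by simp
  qed
  also have "\<dots> = (\<Sum>k \<le> n. prob {\<omega> \<in> space M. Kfree Z n \<omega> = k} * endpoint_prob \<alpha> \<beta> k z)"
    by (simp add: prob_Kfree sum_distrib_right)
  finally show ?thesis .
qed

end

theorem proposition1:
  fixes M :: "'w measure"
    and Z :: "nat \<Rightarrow> 'w \<Rightarrow> st"
    and X Y :: "nat \<Rightarrow> 'w \<Rightarrow> int"
    and lF lA a b \<alpha> \<beta> :: real
    and n :: nat and x y :: int
  assumes M: "prob_space M"
    and Zmeas: "\<And>k. Z k \<in> measurable M (count_space UNIV)"
    and Xmeas: "\<And>k. X k \<in> measurable M (count_space UNIV)"
    and Ymeas: "\<And>k. Y k \<in> measurable M (count_space UNIV)"
    and lam: "lF \<ge> 0" "lA \<ge> 0" "lF + lA = 1"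
    and ab: "0 \<le> a" "a \<le> 1" "0 \<le> b" "b \<le> 1"
    and albe: "\<alpha> \<ge> 0" "\<beta> \<ge> 0" "\<alpha> + \<beta> = 1/2"
    and law: "\<And>(zs :: st list) (vs :: (int \<times> int) list).
      measure M {\<omega> \<in> space M. (\<forall>i < length zs. Z (Suc i) \<omega> = zs ! i) \<and>
                             (\<forall>j < length vs. (X (Suc j) \<omega>, Y (Suc j) \<omega>) = vs ! j)}
      = mc_path_prob lF lA a b zs * (\<Prod>j < length vs. step_prob \<alpha> \<beta> (vs ! j))"
    and n: "n \<ge> 1"
  defines "S \<equiv> Spos Z X Y"
    and "f \<equiv> (\<lambda>m k. measure M {\<omega> \<in> space M. Kfree Z m \<omega> = k})"
  shows "(0 \<le> x \<and> x \<le> 2 * int n \<and> - int n \<le> y \<and> y \<le> int n \<and> even (x - y) \<longrightarrow>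
           measure M {\<omega> \<in> space M. S n \<omega> = (x, y)}
         = (\<Sum>k \<in> {\<lceil>real_of_int x / 2\<rceil> .. int n}. f n (nat k) *
             (\<Sum>j \<in> {max 0 (x - k) .. min ((x + y) div 2) ((x - y) div 2)}.
                fact (nat k) * \<alpha> ^ nat (2 * j + k - x) * \<beta> ^ nat (x - 2 * j) /
                (fact (nat j) * fact (nat (j + k - x)) * fact (nat ((x + y) div 2 - j))
                  * fact (nat ((x - y) div 2 - j))))))
       \<and> (odd (x - y) \<longrightarrow> measure M {\<omega> \<in> space M. S n \<omega> = (x, y)} = 0)"
proof -
  interpret adsorption_walk M Z X Y "mc_path_prob lF lA a b" \<alpha> \<beta>
    by (intro adsorption_walk.intro adsorption_walk_axioms.intro M Zmeas Xmeas Ymeas albe(3) law)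
  have distribution:
    "measure M {\<omega> \<in> space M. S n \<omega> = (x, y)} = (\<Sum>k \<le> n. f n k * endpoint_prob \<alpha> \<beta> k (x, y))"
    unfolding S_def f_def by (rule prob_Spos)
  show ?thesis
    using sum_endpoint_prob_closed_form[where c = "f n" and n = n and \<alpha> = \<alpha> and \<beta> = \<beta>]
    by (simp add: distribution endpoint_prob_odd)
qed

end
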